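(* Let $G$ be an esp-digraph. Then $\chi'_o(G)\le 7$.
   Context: An oriented $r$-arc-coloring of a digraph $G=(V,E)$ (parallel arcs allowed; the definition applies verbatim) is a map $c:E\to\{1,\dots,r\}$ such that (i) $c((u,v))\ne c((v,w))$ for every two arcs $(u,v),(v,w)\in E$, and (ii) $c((u,v))\ne c((y,z))$ for all arcs $(u,v),(v,w),(x,y),(y,z)\in E$ with $c((v,w))=c((x,y))$. The oriented chromatic index $\chi'_o(G)$ is the smallest $r$ for which such a coloring exists. Edge series-parallel (multi)digraphs (esp-digraphs) are defined recursively, each with a distinguished source and sink: (i) a digraph with two distinct vertices $u,v$ and the single arc $(u,v)$ is an esp-digraph with source $u$ and sink $v$; (ii) if $G_1,G_2$ are vertex-disjoint esp-digraphs, then the parallel composition $G_1\cup G_2$ (identify the source of $G_1$ with the source of $G_2$ and the sink of $G_1$ with the sink of $G_2$; arcs are united, possibly creating parallel arcs) is an esp-digraph with these identified source and sink, and the series composition $G_1\times G_2$ (identify the sink of $G_1$ with the source of $G_2$) is an esp-digraph with source the source of $G_1$ and sink the sink of $G_2$. *)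

theory Defs
  imports Main
begin

text \<open>A (multi)digraph is given by a vertex set V, an arc set E (arc identifiers,
  so parallel arcs are allowed) and tail/head maps (only relevant on E).\<close>

definition oriented_arc_coloring ::
  "'e set \<Rightarrow> ('e \<Rightarrow> 'v) \<Rightarrow> ('e \<Rightarrow> 'v) \<Rightarrow> ('e \<Rightarrow> nat) \<Rightarrow> nat \<Rightarrow> bool" where
  "oriented_arc_coloring E tail head c r \<longleftrightarrow>
     (\<forall>a\<in>E. c a \<in> {1..r}) \<and>
     (\<forall>a\<in>E. \<forall>b\<in>E. head a = tail b \<longrightarrow> c a \<noteq> c b) \<and>
     (\<forall>a\<in>E. \<forall>b\<in>E. \<forall>a'\<in>E. \<forall>b'\<in>E.
        head a = tail b \<longrightarrow> head a' = tail b' \<longrightarrow> c b = c a' \<longrightarrow> c a \<noteq> c b')"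

definition oriented_chromatic_index ::
  "'e set \<Rightarrow> ('e \<Rightarrow> 'v) \<Rightarrow> ('e \<Rightarrow> 'v) \<Rightarrow> nat" where
  "oriented_chromatic_index E tail head = (LEAST r. \<exists>c. oriented_arc_coloring E tail head c r)"

text \<open>Edge series-parallel multidigraphs, with the identification of vertices in the
  compositions realised by sharing vertex names (components otherwise vertex-disjoint,
  arcs disjoint). esp tail head V E s t: (V,E,tail,head) is an esp-digraph with source s, sink t.\<close>

inductive esp ::
  "('e \<Rightarrow> 'v) \<Rightarrow> ('e \<Rightarrow> 'v) \<Rightarrow> 'v set \<Rightarrow> 'e set \<Rightarrow> 'v \<Rightarrow> 'v \<Rightarrow> bool"
  for tail head where
  single: "\<lbrakk>u \<noteq> v; tail e = u; head e = v\<rbrakk> \<Longrightarrow> esp tail head {u, v} {e} u v"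
| par: "\<lbrakk>esp tail head V1 E1 s t; esp tail head V2 E2 s t; V1 \<inter> V2 = {s, t}; E1 \<inter> E2 = {}\<rbrakk>
        \<Longrightarrow> esp tail head (V1 \<union> V2) (E1 \<union> E2) s t"
| ser: "\<lbrakk>esp tail head V1 E1 s m; esp tail head V2 E2 m t; V1 \<inter> V2 = {m}; E1 \<inter> E2 = {}\<rbrakk>
        \<Longrightarrow> esp tail head (V1 \<union> V2) (E1 \<union> E2) s t"

end

(* A homomorphism of the line digraph into an oriented graph on r vertices is an oriented
   r-arc-colouring.  We map every esp-digraph into the Paley tournament on seven
   vertices (i -> j iff j - i is a nonzero square mod 7).  The induction carries a phantom
   arc x -> y of the tournament: the arcs leaving the source get out-neighbours of x and the
   arcs entering the sink get colour y.  Parallel composition keeps x and y on both sides;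
   series composition splits x -> y into x -> z -> y, which is always possible because
   every arc of the Paley tournament is the base of a directed 2-path. *)

theory Submission
  imports Defs
begin

definition arc_hom ::
  "'e set \<Rightarrow> ('e \<Rightarrow> 'v) \<Rightarrow> ('e \<Rightarrow> 'v) \<Rightarrow> ('c \<Rightarrow> 'c \<Rightarrow> bool) \<Rightarrow> ('e \<Rightarrow> 'c) \<Rightarrow> bool"
  where "arc_hom E tail head T c \<longleftrightarrow> (\<forall>a\<in>E. \<forall>b\<in>E. head a = tail b \<longrightarrow> T (c a) (c b))"

lemma oriented_arc_coloring_if_arc_hom:
  assumes range: "c ` E \<subseteq> {1..r}" and hom: "arc_hom E tail head T c"
    and irrefl: "\<And>i. \<not> T i i" and asym: "\<And>i j. T i j \<Longrightarrow> \<not> T j i"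
  shows "oriented_arc_coloring E tail head c r"
  unfolding oriented_arc_coloring_def
proof (intro conjI ballI impI)
  fix a assume "a \<in> E"
  then show "c a \<in> {1..r}" using range by blast
next
  fix a b assume "a \<in> E" "b \<in> E" "head a = tail b"
  then have "T (c a) (c b)" using hom unfolding arc_hom_def by blast
  then show "c a \<noteq> c b" using irrefl by metis
next
  fix a b a' b' assume "a \<in> E" "b \<in> E" "a' \<in> E" "b' \<in> E"
    and "head a = tail b" "head a' = tail b'" "c b = c a'"
  then have "T (c a) (c b)" "T (c b) (c b')"
    using hom unfolding arc_hom_def by metis+
  then show "c a \<noteq> c b'" using asym by metis
qed

lemma arc_hom_Un:
  assumes "arc_hom E1 tail head T c1" "arc_hom E2 tail head T c2"
    and "\<forall>a\<in>E1. \<forall>b\<in>E2. head a = tail b \<longrightarrow> T (c1 a) (c2 b)"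
    and "\<forall>a\<in>E2. \<forall>b\<in>E1. head a \<noteq> tail b"
  shows "arc_hom (E1 \<union> E2) tail head T (\<lambda>e. if e \<in> E1 then c1 e else c2 e)"
  using assms unfolding arc_hom_def by auto

definition paley7 :: "nat \<Rightarrow> nat \<Rightarrow> bool" where
  "paley7 i j \<longleftrightarrow> i \<in> {1..7} \<and> j \<in> {1..7} \<and> (j + 7 - i) mod 7 \<in> {1, 2, 4}"

lemma atLeastAtMost_1_7: "{1..7::nat} = {1, 2, 3, 4, 5, 6, 7}"
  by auto

lemma paley7_irrefl: "\<not> paley7 i i"
  by (simp add: paley7_def)

lemma paley7_asym: "paley7 i j \<Longrightarrow> \<not> paley7 j i"
  unfolding paley7_def atLeastAtMost_1_7 by (elim conjE insertE emptyE; simp)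

lemma paley7_two_path:
  assumes "paley7 x y" shows "\<exists>z. paley7 x z \<and> paley7 z y"
proof -
  have "\<exists>z\<in>{1..7}. paley7 x z \<and> paley7 z y"
    using assms unfolding paley7_def atLeastAtMost_1_7 by (elim conjE insertE emptyE; simp)
  then show ?thesis by blast
qed

lemma esp_source_sink:
  assumes "esp tail head V E s t"
  shows "s \<noteq> t \<and> s \<in> V \<and> t \<in> V \<and>
    (\<forall>e\<in>E. tail e \<in> V \<and> head e \<in> V \<and> head e \<noteq> s \<and> tail e \<noteq> t)"
  using assms by induction auto

lemma
  assumes "esp tail head V E s t"
  shows esp_source_neq_sink: "s \<noteq> t" and esp_source_in: "s \<in> V" and esp_sink_in: "t \<in> V"
    and esp_tail_in: "e \<in> E \<Longrightarrow> tail e \<in> V" and esp_head_in: "e \<in> E \<Longrightarrow> head e \<in> V"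
    and esp_head_neq_source: "e \<in> E \<Longrightarrow> head e \<noteq> s"
    and esp_tail_neq_sink: "e \<in> E \<Longrightarrow> tail e \<noteq> t"
  using esp_source_sink[OF assms] by auto

lemma esp_par_no_link:
  assumes G1: "esp tail head V1 E1 s t" and G2: "esp tail head V2 E2 s t"
    and V: "V1 \<inter> V2 = {s, t}" and "a \<in> E1" "b \<in> E2"
  shows "head a \<noteq> tail b"
proof
  assume link: "head a = tail b"
  then have "head a \<in> V1 \<inter> V2"
    using esp_head_in[OF G1 \<open>a \<in> E1\<close>] esp_tail_in[OF G2 \<open>b \<in> E2\<close>] by simp
  then show False
    using V link esp_head_neq_source[OF G1 \<open>a \<in> E1\<close>] esp_tail_neq_sink[OF G2 \<open>b \<in> E2\<close>]
    by simp
qed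

context
  fixes tail head :: "'e \<Rightarrow> 'v" and V1 V2 :: "'v set" and E1 E2 :: "'e set" and s m t :: 'v
  assumes G1: "esp tail head V1 E1 s m" and G2: "esp tail head V2 E2 m t"
    and V: "V1 \<inter> V2 = {m}"
begin

lemma esp_ser_link_at_middle:
  assumes "a \<in> E1" "b \<in> E2" "head a = tail b"
  shows "head a = m"
proof -
  have "head a \<in> V1 \<inter> V2"
    using assms esp_head_in[OF G1] esp_tail_in[OF G2] by (metis IntI)
  then show ?thesis using V by simp
qed

lemma esp_ser_no_back_link:
  assumes "a \<in> E2" "b \<in> E1"
  shows "head a \<noteq> tail b"
proof
  assume "head a = tail b"
  then have "head a \<in> V1 \<inter> V2"
    using assms esp_head_in[OF G2] esp_tail_in[OF G1] by (metis IntI)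
  then show False using V esp_head_neq_source[OF G2 \<open>a \<in> E2\<close>] by simp
qed

lemma esp_ser_tail_neq_source:
  assumes "e \<in> E2" shows "tail e \<noteq> s"
proof
  assume "tail e = s"
  then have "s \<in> V1 \<inter> V2"
    using assms esp_tail_in[OF G2] esp_source_in[OF G1] by (metis IntI)
  then show False using V esp_source_neq_sink[OF G1] by simp
qed

lemma esp_ser_head_neq_sink:
  assumes "e \<in> E1" shows "head e \<noteq> t"
proof
  assume "head e = t"
  then have "t \<in> V1 \<inter> V2"
    using assms esp_head_in[OF G1] esp_sink_in[OF G2] by (metis IntI)
  then show False using V esp_source_neq_sink[OF G2] by simp
qed

end

lemma esp_paley7_hom:
  assumes "esp tail head V E s t" and "paley7 x y"
  shows "\<exists>c. c ` E \<subseteq> {1..7} \<and> arc_hom E tail head paley7 c \<and>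
    (\<forall>e\<in>E. tail e = s \<longrightarrow> paley7 x (c e)) \<and> (\<forall>e\<in>E. head e = t \<longrightarrow> c e = y)"
  using assms
proof (induction arbitrary: x y)
  case (single u v e)
  then show ?case
    using paley7_def by (intro exI[of _ "\<lambda>_. y"]) (auto simp: arc_hom_def)
next
  case (par V1 E1 s t V2 E2)
  obtain c1 where c1: "c1 ` E1 \<subseteq> {1..7}" "arc_hom E1 tail head paley7 c1"
    "\<forall>e\<in>E1. tail e = s \<longrightarrow> paley7 x (c1 e)" "\<forall>e\<in>E1. head e = t \<longrightarrow> c1 e = y"
    using par.IH(1) par.prems by blast
  obtain c2 where c2: "c2 ` E2 \<subseteq> {1..7}" "arc_hom E2 tail head paley7 c2"
    "\<forall>e\<in>E2. tail e = s \<longrightarrow> paley7 x (c2 e)" "\<forall>e\<in>E2. head e = t \<longrightarrow> c2 e = y"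
    using par.IH(2) par.prems by blast
  define c where "c = (\<lambda>e. if e \<in> E1 then c1 e else c2 e)"
  have "arc_hom (E1 \<union> E2) tail head paley7 c"
    using esp_par_no_link[OF par.hyps(1,2,3)] esp_par_no_link[OF par.hyps(2,1)] par.hyps(3)
    unfolding c_def by (intro arc_hom_Un c1(2) c2(2)) (auto simp: Int_commute)
  then show ?case
    using c1 c2 by (intro exI[of _ c]) (auto simp: c_def)
next
  case (ser V1 E1 s m V2 E2 t)
  obtain z where z: "paley7 x z" "paley7 z y"
    using paley7_two_path[OF ser.prems] by blast
  obtain c1 where c1: "c1 ` E1 \<subseteq> {1..7}" "arc_hom E1 tail head paley7 c1"
    "\<forall>e\<in>E1. tail e = s \<longrightarrow> paley7 x (c1 e)" "\<forall>e\<in>E1. head e = m \<longrightarrow> c1 e = z"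
    using ser.IH(1) z(1) by blast
  obtain c2 where c2: "c2 ` E2 \<subseteq> {1..7}" "arc_hom E2 tail head paley7 c2"
    "\<forall>e\<in>E2. tail e = m \<longrightarrow> paley7 z (c2 e)" "\<forall>e\<in>E2. head e = t \<longrightarrow> c2 e = y"
    using ser.IH(2) z(2) by blast
  note composition = ser.hyps(1,2,3)
  define c where "c = (\<lambda>e. if e \<in> E1 then c1 e else c2 e)"
  have "arc_hom (E1 \<union> E2) tail head paley7 c"
    using esp_ser_link_at_middle[OF composition] esp_ser_no_back_link[OF composition] c1(4) c2(3)
    unfolding c_def by (intro arc_hom_Un c1(2) c2(2)) auto
  moreover have "\<forall>e\<in>E1 \<union> E2. tail e = s \<longrightarrow> paley7 x (c e)"
    using c1(3) esp_ser_tail_neq_source[OF composition] unfolding c_def by fastforce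
  moreover have "\<forall>e\<in>E1 \<union> E2. head e = t \<longrightarrow> c e = y"
    using c2(4) esp_ser_head_neq_sink[OF composition] unfolding c_def by fastforce
  moreover have "c ` (E1 \<union> E2) \<subseteq> {1..7}"
    using c1(1) c2(1) unfolding c_def by auto
  ultimately show ?case by blast
qed

theorem mainTheorem6:
  fixes V :: "'v set" and E :: "'e set" and tail head :: "'e \<Rightarrow> 'v" and s t :: 'v
  assumes "esp tail head V E s t"
  shows "oriented_chromatic_index E tail head \<le> 7 \<and> (\<exists>c. oriented_arc_coloring E tail head c 7)"
proof -
  have "paley7 1 2" by (simp add: paley7_def)
  then obtain c where "c ` E \<subseteq> {1..7}" "arc_hom E tail head paley7 c"
    using esp_paley7_hom[OF assms] by blast
  then have "oriented_arc_coloring E tail head c 7"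
    using paley7_irrefl paley7_asym by (rule oriented_arc_coloring_if_arc_hom)
  moreover have "oriented_chromatic_index E tail head \<le> 7"
    unfolding oriented_chromatic_index_def using calculation by (intro Least_le) blast
  ultimately show ?thesis by blast
qed

end
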